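(* Let $\gamma\in(1,2]$, $\delta>0$. Assume that $f$ is convex and $L$-smooth relative to $d$ on $Q$, that $V$ satisfies the triangular scaling property with scaling factor $\gamma$, and that for every $y\in Q$ the pair $(f_\delta(y),\nabla f_\delta(y))$ is a $(\delta,L)$-oracle of $f$ at $y$. Consider the scheme AccBPGM-2 below with $\theta_k=\frac{\gamma}{k+\gamma}$ for all $k\ge0$, and suppose the constants $L_{k+1}$ satisfy, for every $k\ge0$: $L_{k+2}\ge L_{k+1}$, $L_{k+1}\ge(\theta_{k+1}/\theta_k)^{\gamma}$, $f(x_{k+1})\le g(x_{k+1}|y_k)+L_{k+1}V(x_{k+1},y_k)+\delta$, and $L_{k+1}<2L$. Let $x_*$ be a minimizer of $f$ on $Q$. Then for every $N\ge1$, $$f(x_N)-f(x_* )\le2L\Big(\frac{\gamma}{\gamma+N-1}\Big)^{\gamma}V(x_*,x_0)+\big(2(N-1)L+1\big)\delta.$$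
   Context: Setting. $\mathbb{E}$ is a finite-dimensional real vector space with a norm $\|\cdot\|$ and dual space $\mathbb{E}^*$; $\langle g,x\rangle$ denotes the value of $g\in\mathbb{E}^*$ at $x\in\mathbb{E}$. $Q\subset\mathbb{E}$ is a closed convex set. $f:Q\to\mathbb{R}$ is convex and differentiable on an open set containing the relative interior $\mathrm{rint}\,Q$. The prox-function $d:Q\to\mathbb{R}$ is continuously differentiable and $1$-strongly convex with respect to $\|\cdot\|$. The Bregman divergence is $V(x,y)=d(x)-d(y)-\langle\nabla d(y),x-y\rangle$. All minimization subproblems appearing in the algorithms are assumed to have minimizers. Relative smoothness: $f$ is $L$-smooth relative to $d$ on $Q$ if $f(y)\le f(x)+\langle\nabla f(x),y-x\rangle+LV(y,x)$ for all $x\in\mathrm{rint}\,Q$, $y\in Q$. Triangular scaling property with factor $\gamma>0$: $V((1-\theta)x+\theta z,(1-\theta)x+\theta\tilde z)\le\theta^{\gamma}V(z,\tilde z)$ for all $x,z,\tilde z\in Q$ and all $\theta\in[0,1]$. $(\delta,L)$-oracle: a pair $(f_\delta(y),\nabla f_\delta(y))\in\mathbb{R}\times\mathbb{E}^*$ is a $(\delta,L)$-oracle of $f$ at $y$ if $0\le f(x)-\big(f_\delta(y)+\langle\nabla f_\delta(y),x-y\rangle\big)\le LV(x,y)+\delta$ for all $x\in Q$. Notation: $g(x|y):=f_\delta(y)+\langle\nabla f_\delta(y),x-y\rangle$. Scheme AccBPGM-2 (adaptive version). Input: $x_0\in\mathrm{rint}\,Q$, $\gamma\in(1,2]$, $\delta>0$.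 Set $z_0=x_0$, $\theta_0=1$. For $k=0,1,2,\dots$: a constant $L_{k+1}>0$ is chosen, and $y_k=(1-\theta_k)x_k+\theta_kz_k$; $z_{k+1}=\arg\min_{z\in Q}\{g(z|y_k)+\theta_k^{\gamma-1}L_{k+1}V(z,z_k)\}$; $x_{k+1}=(1-\theta_k)x_k+\theta_kz_{k+1}$. *)

theory Defs
  imports "HOL-Analysis.Analysis"
begin

text \<open>The finite-dimensional space E is an abstract type of class euclidean_space;
  the (arbitrary) norm of the paper is a separate function nrm. Elements of the dual
  space are represented by vectors via the inner product (Riesz representation).\<close>

definition is_norm :: "('a::real_vector \<Rightarrow> real) \<Rightarrow> bool" where
  "is_norm nrm \<longleftrightarrow> (\<forall>x. 0 \<le> nrm x) \<and> (\<forall>x. nrm x = 0 \<longleftrightarrow> x = 0)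
     \<and> (\<forall>c x. nrm (c *\<^sub>R x) = \<bar>c\<bar> * nrm x) \<and> (\<forall>x y. nrm (x + y) \<le> nrm x + nrm y)"

definition strongly_convex_1 :: "('a::real_vector \<Rightarrow> real) \<Rightarrow> 'a set \<Rightarrow> ('a \<Rightarrow> real) \<Rightarrow> bool" where
  "strongly_convex_1 nrm Q d \<longleftrightarrow> (\<forall>x\<in>Q. \<forall>y\<in>Q. \<forall>t::real. 0 \<le> t \<and> t \<le> 1 \<longrightarrow>
     d (t *\<^sub>R x + (1 - t) *\<^sub>R y) \<le> t * d x + (1 - t) * d y - t * (1 - t) / 2 * (nrm (x - y))\<^sup>2)"

definition bregman :: "('a::real_inner \<Rightarrow> real) \<Rightarrow> ('a \<Rightarrow> 'a) \<Rightarrow> 'a \<Rightarrow> 'a \<Rightarrow> real" where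
  "bregman d gd x y = d x - d y - gd y \<bullet> (x - y)"

definition rel_smooth :: "real \<Rightarrow> ('a::real_inner \<Rightarrow> real) \<Rightarrow> ('a \<Rightarrow> 'a) \<Rightarrow> ('a \<Rightarrow> real) \<Rightarrow> ('a \<Rightarrow> 'a) \<Rightarrow> 'a set \<Rightarrow> bool" where
  "rel_smooth L f gf d gd Q \<longleftrightarrow> (\<forall>x\<in>rel_interior Q. \<forall>y\<in>Q.
     f y \<le> f x + gf x \<bullet> (y - x) + L * bregman d gd y x)"

definition triangular_scaling :: "real \<Rightarrow> ('a::real_inner \<Rightarrow> real) \<Rightarrow> ('a \<Rightarrow> 'a) \<Rightarrow> 'a set \<Rightarrow> bool" where
  "triangular_scaling \<gamma> d gd Q \<longleftrightarrow> (\<forall>x\<in>Q. \<forall>z\<in>Q. \<forall>zt\<in>Q. \<forall>\<theta>::real. 0 \<le> \<theta> \<and> \<theta> \<le> 1 \<longrightarrow>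
     bregman d gd ((1 - \<theta>) *\<^sub>R x + \<theta> *\<^sub>R z) ((1 - \<theta>) *\<^sub>R x + \<theta> *\<^sub>R zt) \<le> \<theta> powr \<gamma> * bregman d gd z zt)"

definition is_dL_orc :: "real \<Rightarrow> real \<Rightarrow> ('a::real_inner \<Rightarrow> real) \<Rightarrow> ('a \<Rightarrow> real) \<Rightarrow> ('a \<Rightarrow> 'a) \<Rightarrow> 'a set \<Rightarrow> 'a \<Rightarrow> real \<Rightarrow> 'a \<Rightarrow> bool" where
  "is_dL_orc \<delta> L f d gd Q y fy gy \<longleftrightarrow> (\<forall>x\<in>Q.
     0 \<le> f x - (fy + gy \<bullet> (x - y)) \<and> f x - (fy + gy \<bullet> (x - y)) \<le> L * bregman d gd x y + \<delta>)"

end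

theory Submission
  imports Defs
begin

text \<open>Write e k = f (x k) - f xs, \<Phi> k = V(xs, z k) and a k = \<theta> k powr \<gamma> * L (k+1).
  One iteration gives e (k+1) \<le> (1 - \<theta> k) e k + a k (\<Phi> k - \<Phi> (k+1)) + \<delta>: combine the adaptive
  descent condition, the affinity of the oracle model along x (k+1) - y k =
  (1 - \<theta> k)(x k - y k) + \<theta> k (z (k+1) - y k), triangular scaling
  V(x (k+1), y k) \<le> \<theta> k powr \<gamma> V(z (k+1), z k), the three-point inequality of the proximal step, and
  the oracle lower bound at x k and xs. Because (1 - \<theta> (k+1)) \<theta> k powr \<gamma> \<le> \<theta> (k+1) powr \<gamma>
  (Young's inequality) and L is nondecreasing, e (k+1) / a k + \<Phi> (k+1) telescopes. Each
  accumulated error a m \<delta> / a k is at most 2 L \<delta>, since a k \<ge> \<theta> (k+1) powr \<gamma> and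
  a m \<le> 2 L \<theta> m powr \<gamma>.\<close>

lemma has_real_derivative_along_line:
  fixes d :: "'a::real_inner \<Rightarrow> real"
  assumes "(d has_derivative (\<lambda>h. g \<bullet> h)) (at u)"
  shows "((\<lambda>t. d (u + t *\<^sub>R v)) has_real_derivative g \<bullet> v) (at 0)"
proof -
  have "((\<lambda>t::real. u + t *\<^sub>R v) has_derivative (\<lambda>t. t *\<^sub>R v)) (at 0)"
    by (auto intro!: derivative_eq_intros)
  moreover have "(d has_derivative (\<lambda>h. g \<bullet> h)) (at (u + 0 *\<^sub>R v))" using assms by simp
  ultimately have "((\<lambda>t. d (u + t *\<^sub>R v)) has_derivative (\<lambda>t. g \<bullet> (t *\<^sub>R v))) (at 0)"
    by (rule has_derivative_compose)
  moreover have "(\<lambda>t. g \<bullet> (t *\<^sub>R v)) = (*) (g \<bullet> v)" by (auto simp: mult.commute)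
  ultimately show ?thesis by (simp add: has_field_derivative_def)
qed

lemma DERIV_ge_of_right_bound:
  fixes h :: "real \<Rightarrow> real"
  assumes der: "(h has_real_derivative D) (at 0)"
    and bound: "\<And>t. 0 < t \<Longrightarrow> t \<le> 1 \<Longrightarrow> h 0 \<le> h t + t * K"
  shows "- K \<le> D"
proof (rule ccontr)
  assume "\<not> - K \<le> D"
  then have "D + K < 0" by simp
  moreover have "((\<lambda>t. h t + t * K) has_real_derivative D + K) (at 0)"
    by (auto intro!: derivative_eq_intros der)
  ultimately obtain e where "e > 0"
    and dec: "\<And>t. 0 < t \<Longrightarrow> t < e \<Longrightarrow> h (0 + t) + (0 + t) * K < h 0 + 0 * K"
    using DERIV_neg_dec_right by blast
  define t where "t = min (e/2) 1"
  have "0 < t" "t < e" "t \<le> 1" using \<open>e > 0\<close> by (auto simp: t_def)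
  with dec[of t] bound[of t] show False by simp
qed

lemma strongly_convex_1_imp_convex_on:
  assumes "strongly_convex_1 nrm Q d" and "convex Q"
  shows "convex_on Q d"
proof (rule convex_onI[OF _ \<open>convex Q\<close>])
  fix t :: real and x y assume "0 < t" "t < 1" "x \<in> Q" "y \<in> Q"
  with assms(1) have "d (t *\<^sub>R y + (1 - t) *\<^sub>R x) \<le> t * d y + (1 - t) * d x - t * (1 - t) / 2 * (nrm (y - x))\<^sup>2"
    unfolding strongly_convex_1_def by simp
  moreover have "0 \<le> t * (1 - t) / 2 * (nrm (y - x))\<^sup>2" using \<open>0 < t\<close> \<open>t < 1\<close> by simp
  ultimately show "d ((1 - t) *\<^sub>R x + t *\<^sub>R y) \<le> (1 - t) * d x + t * d y"
    by (simp add: add.commute)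
qed

lemma bregman_nonneg:
  fixes d :: "'a::real_inner \<Rightarrow> real"
  assumes "convex_on Q d" and "x \<in> Q" and "y \<in> Q"
    and "(d has_derivative (\<lambda>h. gd y \<bullet> h)) (at y)"
  shows "0 \<le> bregman d gd x y"
proof -
  have "- (d x - d y) \<le> - (gd y \<bullet> (x - y))"
  proof (rule DERIV_ge_of_right_bound)
    show "((\<lambda>t. - d (y + t *\<^sub>R (x - y))) has_real_derivative - (gd y \<bullet> (x - y))) (at 0)"
      using DERIV_minus[OF has_real_derivative_along_line[OF assms(4)]] .
    fix t :: real assume "0 < t" "t \<le> 1"
    with assms(1-3) have "d ((1 - t) *\<^sub>R y + t *\<^sub>R x) \<le> (1 - t) * d y + t * d x"
      by (intro convex_onD) auto
    moreover have "y + t *\<^sub>R (x - y) = (1 - t) *\<^sub>R y + t *\<^sub>R x" by (simp add: algebra_simps)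
    ultimately show "- d (y + 0 *\<^sub>R (x - y)) \<le> - d (y + t *\<^sub>R (x - y)) + t * (d x - d y)"
      by (simp add: algebra_simps)
  qed
  then show ?thesis by (simp add: bregman_def)
qed

text \<open>First-order optimality of a Bregman proximal step, tested along the segment from the
  minimiser z towards w.\<close>
lemma bregman_prox_three_point:
  fixes d :: "'a::real_inner \<Rightarrow> real"
  assumes "convex Q" and "z \<in> Q" and "w \<in> Q"
    and der: "(d has_derivative (\<lambda>h. gd z \<bullet> h)) (at z)"
    and min: "\<forall>u\<in>Q. a \<bullet> z + c * bregman d gd z z0 \<le> a \<bullet> u + c * bregman d gd u z0"
  shows "a \<bullet> z + c * bregman d gd z z0 + c * bregman d gd w z \<le> a \<bullet> w + c * bregman d gd w z0"
proof -
  define v where "v = w - z"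
  define K where "K = a \<bullet> v - c * (gd z0 \<bullet> v)"
  have "- K \<le> c * (gd z \<bullet> v)"
  proof (rule DERIV_ge_of_right_bound)
    show "((\<lambda>t. c * d (z + t *\<^sub>R v)) has_real_derivative c * (gd z \<bullet> v)) (at 0)"
      using DERIV_cmult[OF has_real_derivative_along_line[OF der]] .
    fix t :: real assume "0 < t" "t \<le> 1"
    have "z + t *\<^sub>R v = (1 - t) *\<^sub>R z + t *\<^sub>R w" by (simp add: v_def algebra_simps)
    with \<open>0 < t\<close> \<open>t \<le> 1\<close> assms(1-3) have "z + t *\<^sub>R v \<in> Q" by (simp add: convexD)
    from min[rule_format, OF this]
    show "c * d (z + 0 *\<^sub>R v) \<le> c * d (z + t *\<^sub>R v) + t * K"
      by (simp add: bregman_def K_def algebra_simps)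
  qed
  then show ?thesis
    by (simp add: bregman_def K_def v_def algebra_simps)
qed

lemma Young_powr_shift:
  fixes n g :: real
  assumes n: "0 < n" and g: "1 < g"
  shows "n * (n + g) powr (g - 1) \<le> (n + g - 1) powr g"
proof -
  have "n powr (1/g) * (n + g) powr ((g - 1)/g) \<le> (1/g) * n + ((g - 1)/g) * (n + g)"
    using Youngs_inequality_0[of "1/g" "(g - 1)/g" n "n + g"] n g by (auto simp: field_simps)
  also have "\<dots> = n + g - 1" using g by (simp add: field_simps)
  finally have "(n powr (1/g) * (n + g) powr ((g - 1)/g)) powr g \<le> (n + g - 1) powr g"
    using g n by (intro powr_mono2) auto
  moreover have "(n powr (1/g) * (n + g) powr ((g - 1)/g)) powr g = n * (n + g) powr (g - 1)"
    using n g by (simp add: powr_mult powr_powr)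
  ultimately show ?thesis by simp
qed

lemma step_size_decrease:
  fixes \<gamma> :: real
  assumes "1 < \<gamma>"
  shows "(1 - \<gamma> / (real (Suc k) + \<gamma>)) * (\<gamma> / (real k + \<gamma>)) powr \<gamma> \<le> (\<gamma> / (real (Suc k) + \<gamma>)) powr \<gamma>"
proof -
  define n where "n = real (Suc k)"
  have n: "1 \<le> n" and pos: "0 < n + \<gamma>" "0 < n + \<gamma> - 1" using assms by (auto simp: n_def)
  have "n * (n + \<gamma>) powr (\<gamma> - 1) \<le> (n + \<gamma> - 1) powr \<gamma>"
    using Young_powr_shift[of n \<gamma>] n assms by simp
  moreover have "(n + \<gamma>) powr \<gamma> = (n + \<gamma>) * (n + \<gamma>) powr (\<gamma> - 1)"
    using pos by (simp add: powr_diff)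
  ultimately have "n / (n + \<gamma>) \<le> ((n + \<gamma> - 1) / (n + \<gamma>)) powr \<gamma>"
    using pos by (simp add: powr_divide divide_simps mult.commute)
  then have "n / (n + \<gamma>) * (\<gamma> / (n + \<gamma> - 1)) powr \<gamma>
      \<le> ((n + \<gamma> - 1) / (n + \<gamma>)) powr \<gamma> * (\<gamma> / (n + \<gamma> - 1)) powr \<gamma>"
    by (rule mult_right_mono) simp
  also have "\<dots> = (\<gamma> / (n + \<gamma>)) powr \<gamma>"
    using pos assms by (simp add: powr_mult[symmetric])
  finally show ?thesis
    using pos by (simp add: n_def field_simps)
qed

lemma accelerated_bregman_step_estimate:
  fixes f d :: "'a::real_inner \<Rightarrow> real" and gd :: "'a \<Rightarrow> 'a" and fy :: real
  assumes Q: "convex Q" and in_Q: "xk \<in> Q" "zk \<in> Q" "z1 \<in> Q" "xs \<in> Q"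
    and t: "0 < t" "t \<le> 1" and M: "0 \<le> M"
    and y: "y = (1 - t) *\<^sub>R xk + t *\<^sub>R zk"
    and x1: "x1 = (1 - t) *\<^sub>R xk + t *\<^sub>R z1"
    and model: "\<forall>u\<in>Q. fy + gy \<bullet> (u - y) \<le> f u"
    and der: "(d has_derivative (\<lambda>h. gd z1 \<bullet> h)) (at z1)"
    and prox: "\<forall>w\<in>Q. fy + gy \<bullet> (z1 - y) + t powr (\<gamma> - 1) * M * bregman d gd z1 zk
                    \<le> fy + gy \<bullet> (w - y) + t powr (\<gamma> - 1) * M * bregman d gd w zk"
    and descent: "f x1 \<le> fy + gy \<bullet> (x1 - y) + M * bregman d gd x1 y + \<delta>"
    and scaling: "triangular_scaling \<gamma> d gd Q"
  shows "f x1 - f xs \<le> (1 - t) * (f xk - f xs)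
           + t powr \<gamma> * M * (bregman d gd xs zk - bregman d gd xs z1) + \<delta>"
proof -
  define c where "c = t powr (\<gamma> - 1) * M"
  have tc: "t * c = t powr \<gamma> * M"
    using t by (simp add: c_def powr_diff field_simps)
  have split: "fy + gy \<bullet> (x1 - y) = (1 - t) * (fy + gy \<bullet> (xk - y)) + t * (fy + gy \<bullet> (z1 - y))"
    unfolding x1 y by (simp add: algebra_simps)
  have "bregman d gd x1 y \<le> t powr \<gamma> * bregman d gd z1 zk"
    unfolding x1 y using scaling[unfolded triangular_scaling_def] in_Q t by simp
  then have "M * bregman d gd x1 y \<le> M * (t powr \<gamma> * bregman d gd z1 zk)"
    using M by (rule mult_left_mono)
  also have "\<dots> = t * (c * bregman d gd z1 zk)"
    using tc by (metis mult.assoc mult.commute)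
  finally have scaled: "M * bregman d gd x1 y \<le> t * (c * bregman d gd z1 zk)" .
  have "gy \<bullet> z1 + c * bregman d gd z1 zk + c * bregman d gd xs z1 \<le> gy \<bullet> xs + c * bregman d gd xs zk"
    using prox by (intro bregman_prox_three_point[where gd = gd, OF Q in_Q(3,4) der]) (simp add: c_def inner_diff_right)
  moreover have "fy + gy \<bullet> (xs - y) \<le> f xs" using model in_Q by auto
  ultimately have three_point: "fy + gy \<bullet> (z1 - y) + c * bregman d gd z1 zk
      \<le> f xs + c * bregman d gd xs zk - c * bregman d gd xs z1"
    by (simp add: inner_diff_right)
  have "(1 - t) * (fy + gy \<bullet> (xk - y)) \<le> (1 - t) * f xk"
    using model in_Q t by (intro mult_left_mono) auto
  moreover have "t * (fy + gy \<bullet> (z1 - y) + c * bregman d gd z1 zk)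
      \<le> t * (f xs + c * bregman d gd xs zk - c * bregman d gd xs z1)"
    using three_point t by (intro mult_left_mono) auto
  ultimately have "f x1 \<le> (1 - t) * f xk + t * (f xs + c * bregman d gd xs zk - c * bregman d gd xs z1) + \<delta>"
    using descent split scaled by (simp add: distrib_left)
  then show ?thesis
    by (simp add: right_diff_distrib left_diff_distrib distrib_left mult.assoc[symmetric] tc)
qed

text \<open>Dividing the k-th recursion step by a k turns it into a telescoping sum, since the
  contraction factor (1 - \<theta> (Suc k)) / a (Suc k) is at most 1 / a k.\<close>
lemma rate_recursion_telescope:
  fixes e \<Phi> a \<theta> :: "nat \<Rightarrow> real"
  assumes e: "\<And>k. 0 \<le> e k" and \<Phi>: "\<And>k. 0 \<le> \<Phi> k" and a: "\<And>k. 0 < a k" and "\<theta> 0 = 1"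
    and step: "\<And>k. e (Suc k) \<le> (1 - \<theta> k) * e k + a k * (\<Phi> k - \<Phi> (Suc k)) + \<delta>"
    and weights: "\<And>k. (1 - \<theta> (Suc k)) * a k \<le> a (Suc k)"
  shows "e (Suc m) \<le> a m * \<Phi> 0 + (\<Sum>k\<le>m. a m * \<delta> / a k)"
proof -
  have "e (Suc m) / a m + \<Phi> (Suc m) \<le> \<Phi> 0 + (\<Sum>k\<le>m. \<delta> / a k)"
  proof (induction m)
    case 0
    have "e 1 \<le> a 0 * (\<Phi> 0 - \<Phi> 1) + \<delta>" using step[of 0] \<open>\<theta> 0 = 1\<close> by simp
    then have "e 1 / a 0 \<le> \<Phi> 0 - \<Phi> 1 + \<delta> / a 0" using a[of 0] by (simp add: field_simps)
    then show ?case by simp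
  next
    case (Suc m)
    have "(1 - \<theta> (Suc m)) / a (Suc m) \<le> 1 / a m"
      using weights[of m] a[of m] a[of "Suc m"] by (simp add: field_simps)
    then have "(1 - \<theta> (Suc m)) / a (Suc m) * e (Suc m) \<le> e (Suc m) / a m"
      using mult_right_mono[OF _ e] by fastforce
    moreover have "e (Suc (Suc m)) / a (Suc m) \<le> (1 - \<theta> (Suc m)) / a (Suc m) * e (Suc m)
        + (\<Phi> (Suc m) - \<Phi> (Suc (Suc m))) + \<delta> / a (Suc m)"
      using step[of "Suc m"] a[of "Suc m"] by (simp add: field_simps)
    ultimately show ?case using Suc.IH by simp
  qed
  then have "e (Suc m) / a m \<le> \<Phi> 0 + (\<Sum>k\<le>m. \<delta> / a k)" using \<Phi>[of "Suc m"] by linarith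
  then show ?thesis using a[of m] by (simp add: field_simps sum_distrib_left)
qed

lemma sum_weight_ratios_le:
  fixes a :: "nat \<Rightarrow> real"
  assumes a: "\<And>k. 0 < a k" and ratio: "\<And>k. k < m \<Longrightarrow> a m \<le> C * a k" and "0 \<le> \<delta>"
  shows "(\<Sum>k\<le>m. a m * \<delta> / a k) \<le> (real m * C + 1) * \<delta>"
proof -
  have "a m * \<delta> / a k \<le> C * \<delta>" if "k < m" for k
    using mult_right_mono[OF ratio[OF that] \<open>0 \<le> \<delta>\<close>] a[of k] by (simp add: divide_simps ac_simps)
  then have "(\<Sum>k<m. a m * \<delta> / a k) \<le> (\<Sum>k<m. C * \<delta>)" by (intro sum_mono) auto
  moreover have "(\<Sum>k\<le>m. a m * \<delta> / a k) = (\<Sum>k<m. a m * \<delta> / a k) + \<delta>"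
    using a[of m] by (simp add: lessThan_Suc_atMost[symmetric])
  ultimately show ?thesis by (simp add: algebra_simps)
qed

lemma convex_combination_iterates_in:
  assumes "convex Q" and "x 0 \<in> Q" and "\<And>k. z (Suc k) \<in> Q"
    and "\<And>k. 0 \<le> \<theta> k" and "\<And>k. \<theta> k \<le> 1"
    and "\<And>k. x (Suc k) = (1 - \<theta> k) *\<^sub>R x k + \<theta> k *\<^sub>R z (Suc k)"
  shows "x k \<in> Q"
proof (induction k)
  case 0 show ?case using assms(2) .
next
  case (Suc k) then show ?case
    using assms(1,3-6) by (simp add: convexD)
qed

lemma weight_ratio_bound:
  fixes \<theta> Lk :: "nat \<Rightarrow> real"
  assumes \<theta>: "\<And>k. 0 < \<theta> k" "\<And>i j. i \<le> j \<Longrightarrow> \<theta> j \<le> \<theta> i" and "0 \<le> \<gamma>"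
    and ratio: "\<And>k. (\<theta> (Suc k) / \<theta> k) powr \<gamma> \<le> Lk (Suc k)"
    and bound: "\<And>k. Lk (Suc k) \<le> B" and "k < m"
  shows "\<theta> m powr \<gamma> * Lk (Suc m) \<le> B * (\<theta> k powr \<gamma> * Lk (Suc k))"
proof -
  have B: "0 \<le> B" using ratio[of 0] bound[of 0] by (meson order_trans powr_ge_zero)
  have "\<theta> m powr \<gamma> * Lk (Suc m) \<le> \<theta> m powr \<gamma> * B" by (intro mult_left_mono bound) simp
  also have "\<dots> \<le> \<theta> (Suc k) powr \<gamma> * B"
    using \<theta> \<open>0 \<le> \<gamma>\<close> \<open>k < m\<close> B by (intro mult_right_mono powr_mono2) (auto simp: less_imp_le)
  also have "\<theta> (Suc k) powr \<gamma> \<le> \<theta> k powr \<gamma> * Lk (Suc k)"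
    using ratio[of k] \<theta>(1)[of k] by (simp add: powr_divide divide_le_eq mult.commute)
  then have "\<theta> (Suc k) powr \<gamma> * B \<le> B * (\<theta> k powr \<gamma> * Lk (Suc k))"
    using B by (simp add: mult.commute mult_left_mono)
  finally show ?thesis .
qed

lemma rate_from_recursion:
  fixes e \<Phi> \<theta> Lk :: "nat \<Rightarrow> real"
  assumes e: "\<And>k. 0 \<le> e k" and \<Phi>: "\<And>k. 0 \<le> \<Phi> k"
    and \<theta>: "\<And>k. 0 < \<theta> k" "\<And>i j. i \<le> j \<Longrightarrow> \<theta> j \<le> \<theta> i" "\<theta> 0 = 1"
    and "0 \<le> \<gamma>" and "0 \<le> \<delta>"
    and bound: "\<And>k. Lk (Suc k) \<le> B"
    and ratio: "\<And>k. (\<theta> (Suc k) / \<theta> k) powr \<gamma> \<le> Lk (Suc k)"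
    and weights: "\<And>k. (1 - \<theta> (Suc k)) * (\<theta> k powr \<gamma> * Lk (Suc k)) \<le> \<theta> (Suc k) powr \<gamma> * Lk (Suc (Suc k))"
    and step: "\<And>k. e (Suc k) \<le> (1 - \<theta> k) * e k + \<theta> k powr \<gamma> * Lk (Suc k) * (\<Phi> k - \<Phi> (Suc k)) + \<delta>"
  shows "e (Suc m) \<le> B * \<theta> m powr \<gamma> * \<Phi> 0 + (real m * B + 1) * \<delta>"
proof -
  define a where "a k = \<theta> k powr \<gamma> * Lk (Suc k)" for k
  have a_pos: "0 < a k" for k
  proof -
    have "0 < (\<theta> (Suc k) / \<theta> k) powr \<gamma>" using \<theta>(1)[of k] \<theta>(1)[of "Suc k"] by simp
    with ratio[of k] have "0 < Lk (Suc k)" by linarith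
    with \<theta>(1)[of k] show ?thesis by (simp add: a_def)
  qed
  have "e (Suc m) \<le> a m * \<Phi> 0 + (\<Sum>k\<le>m. a m * \<delta> / a k)"
    using e \<Phi> a_pos \<theta>(3) step weights unfolding a_def by (rule rate_recursion_telescope)
  also have "a m * \<Phi> 0 \<le> B * \<theta> m powr \<gamma> * \<Phi> 0"
  proof -
    have "a m \<le> \<theta> m powr \<gamma> * B" unfolding a_def using bound by (intro mult_left_mono) auto
    from mult_right_mono[OF this \<Phi>[of 0]] show ?thesis by (simp add: ac_simps)
  qed
  also have "(\<Sum>k\<le>m. a m * \<delta> / a k) \<le> (real m * B + 1) * \<delta>"
  proof (rule sum_weight_ratios_le[OF a_pos _ \<open>0 \<le> \<delta>\<close>])
    show "a m \<le> B * a k" if "k < m" for k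
      unfolding a_def using \<theta>(1,2) \<open>0 \<le> \<gamma>\<close> ratio bound that by (rule weight_ratio_bound)
  qed
  finally show ?thesis by simp
qed

theorem theorem3:
  fixes Q :: "'a::euclidean_space set"
    and nrm :: "'a \<Rightarrow> real"
    and f d :: "'a \<Rightarrow> real" and gf gd :: "'a \<Rightarrow> 'a"
    and f\<delta> :: "'a \<Rightarrow> real" and gf\<delta> :: "'a \<Rightarrow> 'a"
    and \<gamma> \<delta> L :: real
    and x y z :: "nat \<Rightarrow> 'a" and Lk :: "nat \<Rightarrow> real" and \<theta> :: "nat \<Rightarrow> real"
    and xs :: 'a
  assumes norm: "is_norm nrm"
    and Q: "closed Q" "convex Q"
    and f_conv: "convex_on Q f"
    and f_diff: "\<exists>U. open U \<and> rel_interior Q \<subseteq> U \<and>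
                   (\<forall>u\<in>U. (f has_derivative (\<lambda>h. gf u \<bullet> h)) (at u))"
    and d_diff: "\<exists>U. open U \<and> Q \<subseteq> U \<and> continuous_on U gd \<and>
                   (\<forall>u\<in>U. (d has_derivative (\<lambda>h. gd u \<bullet> h)) (at u))"
    and d_sc: "strongly_convex_1 nrm Q d"
    and \<gamma>: "1 < \<gamma>" "\<gamma> \<le> 2"
    and \<delta>: "0 < \<delta>"
    and smooth: "rel_smooth L f gf d gd Q"
    and tsp: "triangular_scaling \<gamma> d gd Q"
    and orc: "\<forall>u\<in>Q. is_dL_orc \<delta> L f d gd Q u (f\<delta> u) (gf\<delta> u)"
    and \<theta>_def: "\<forall>k. \<theta> k = \<gamma> / (real k + \<gamma>)"
    and x0: "x 0 \<in> rel_interior Q"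
    and z0: "z 0 = x 0"
    and y_def: "\<forall>k. y k = (1 - \<theta> k) *\<^sub>R x k + \<theta> k *\<^sub>R z k"
    and z_step: "\<forall>k. z (Suc k) \<in> Q \<and> (\<forall>w\<in>Q.
         f\<delta> (y k) + gf\<delta> (y k) \<bullet> (z (Suc k) - y k) + \<theta> k powr (\<gamma> - 1) * Lk (Suc k) * bregman d gd (z (Suc k)) (z k)
       \<le> f\<delta> (y k) + gf\<delta> (y k) \<bullet> (w - y k) + \<theta> k powr (\<gamma> - 1) * Lk (Suc k) * bregman d gd w (z k))"
    and x_step: "\<forall>k. x (Suc k) = (1 - \<theta> k) *\<^sub>R x k + \<theta> k *\<^sub>R z (Suc k)"
    and Lk_pos: "\<forall>k. 0 < Lk (Suc k)"
    and Lk_mono: "\<forall>k. Lk (Suc k) \<le> Lk (Suc (Suc k))"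
    and Lk_ratio: "\<forall>k. (\<theta> (Suc k) / \<theta> k) powr \<gamma> \<le> Lk (Suc k)"
    and Lk_desc: "\<forall>k. f (x (Suc k)) \<le> f\<delta> (y k) + gf\<delta> (y k) \<bullet> (x (Suc k) - y k)
                         + Lk (Suc k) * bregman d gd (x (Suc k)) (y k) + \<delta>"
    and Lk_bound: "\<forall>k. Lk (Suc k) < 2 * L"
    and xs: "xs \<in> Q" "\<forall>u\<in>Q. f xs \<le> f u"
  shows "\<forall>N\<ge>1. f (x N) - f xs \<le> 2 * L * (\<gamma> / (\<gamma> + real N - 1)) powr \<gamma> * bregman d gd xs (x 0)
                  + (2 * (real N - 1) * L + 1) * \<delta>"
proof (intro allI impI)
  fix N :: nat assume "1 \<le> N"
  then obtain m where m: "N = Suc m" by (cases N) auto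
  obtain U where "Q \<subseteq> U" and "\<forall>u\<in>U. (d has_derivative (\<lambda>h. gd u \<bullet> h)) (at u)"
    using d_diff by blast
  then have d_der: "\<And>u. u \<in> Q \<Longrightarrow> (d has_derivative (\<lambda>h. gd u \<bullet> h)) (at u)" by blast
  have \<theta>_pos: "0 < \<theta> k" and \<theta>_le_1: "\<theta> k \<le> 1" for k using \<theta>_def \<gamma> by auto
  have z_in: "z k \<in> Q" for k using z0 x0 rel_interior_subset z_step by (cases k) auto
  have x_in: "x k \<in> Q" for k
    using convex_combination_iterates_in[OF Q(2) _ z_in] x0 rel_interior_subset x_step \<theta>_pos \<theta>_le_1
    by (meson less_imp_le subsetD)
  have y_in: "y k \<in> Q" for k
    using y_def convexD[OF Q(2) x_in z_in] \<theta>_pos \<theta>_le_1 by (simp add: less_imp_le)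
  have "f (x (Suc m)) - f xs \<le> 2 * L * \<theta> m powr \<gamma> * bregman d gd xs (z 0) + (real m * (2 * L) + 1) * \<delta>"
  proof (rule rate_from_recursion[where Lk = Lk and \<theta> = \<theta>])
    show "0 \<le> f (x k) - f xs" for k using xs x_in by simp
    show "0 \<le> bregman d gd xs (z k)" for k
      by (rule bregman_nonneg[where gd = gd, OF strongly_convex_1_imp_convex_on[OF d_sc Q(2)] xs(1) z_in d_der[OF z_in]])
    show "i \<le> j \<Longrightarrow> \<theta> j \<le> \<theta> i" for i j
      using \<theta>_def \<gamma> by (auto intro!: divide_left_mono)
    show "(1 - \<theta> (Suc k)) * (\<theta> k powr \<gamma> * Lk (Suc k)) \<le> \<theta> (Suc k) powr \<gamma> * Lk (Suc (Suc k))" for k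
      using mult_mono[OF step_size_decrease[OF \<gamma>(1), of k] Lk_mono[rule_format, of k]] \<theta>_le_1 Lk_pos \<theta>_def
      by (simp add: mult.assoc less_imp_le)
    show "f (x (Suc k)) - f xs \<le> (1 - \<theta> k) * (f (x k) - f xs)
        + \<theta> k powr \<gamma> * Lk (Suc k) * (bregman d gd xs (z k) - bregman d gd xs (z (Suc k))) + \<delta>" for k
    proof (rule accelerated_bregman_step_estimate[where gd = gd, OF Q(2) x_in z_in z_in xs(1) \<theta>_pos \<theta>_le_1
        less_imp_le[OF Lk_pos[rule_format]] y_def[rule_format] x_step[rule_format] _ d_der[OF z_in]])
      show "\<forall>u\<in>Q. f\<delta> (y k) + gf\<delta> (y k) \<bullet> (u - y k) \<le> f u"
        using orc y_in unfolding is_dL_orc_def by fastforce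
    qed (use z_step Lk_desc tsp in auto)
  qed (use \<theta>_def \<gamma> \<delta> \<theta>_pos Lk_pos Lk_bound Lk_ratio in \<open>auto simp: less_imp_le\<close>)
  then show "f (x N) - f xs \<le> 2 * L * (\<gamma> / (\<gamma> + real N - 1)) powr \<gamma> * bregman d gd xs (x 0)
                  + (2 * (real N - 1) * L + 1) * \<delta>"
    using \<theta>_def z0 by (simp add: m algebra_simps)
qed

end
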